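(* Let $p$ be a prime, $n$ a non-negative integer and $A_*$ a graded commutative $\mathbb F_p$-algebra. The subset $G_{p,n}(A_* )$ of $G_p(A_* )$ consisting of the elements $\alpha(X)=\sum_{i\ge0}\alpha_iX^{p^i}$ with $\alpha_i^{p^{n-i+1}}=0$ for $i=1,2,\dots,n$ and $\alpha_i=0$ for $i\ge n+1$ is a subgroup of $G_p(A_* )$.
   Context: Graded commutative means $ab=(-1)^{\deg a\deg b}ba$. If $p=2$, $G_2(A_* )$ is the set of power series $\alpha(X)=\sum_{i\ge0}\alpha_iX^{2^i}\in A_*[[X]]$ ($X$ of degree $-1$) with $\alpha_i\in A_{2^i-1}$ and $\alpha_0=1$. If $p$ is odd, let $\epsilon$ have degree $-1$ with $\epsilon^2=0$, $X$ degree $-2$, and $G_p(A_* )$ is the set of $\alpha(X)=\sum_{i\ge0}\alpha_iX^{p^i}\in (A_*\otimes_{\mathbb F_p}\mathbb F_p[\epsilon]/(\epsilon^2))[[X]]$ with $\alpha_i$ homogeneous of degree $2(p^i-1)$ and $\alpha_0-1\in(\epsilon)$. The group law is $\alpha(X)\cdot\beta(X)=\beta(\alpha(X))$, i.e. the coefficient of $X^{p^i}$ in $\alpha\cdot\beta$ is $\sum_{j=0}^i\alpha_{i-j}^{p^j}\beta_j$. *)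

theory Defs
  imports "HOL-Algebra.Group" "HOL-Library.Product_Plus" "HOL-Computational_Algebra.Primes"
begin

text \<open>A graded algebra is modelled as an (associative, unital, not necessarily
commutative) ring of type 'a together with its homogeneous components
A k (k an integer degree).  The ring is the direct sum of the A k.\<close>

definition is_decomp :: "(int \<Rightarrow> 'a::ring_1 set) \<Rightarrow> 'a \<Rightarrow> (int \<Rightarrow> 'a) \<Rightarrow> bool" where
  "is_decomp A x c \<longleftrightarrow>
     finite {k. c k \<noteq> 0} \<and> (\<forall>k. c k \<in> A k) \<and> x = sum c {k. c k \<noteq> 0}"

definition graded_comm_algebra_Fp :: "nat \<Rightarrow> (int \<Rightarrow> 'a::ring_1 set) \<Rightarrow> bool" where
  "graded_comm_algebra_Fp p A \<longleftrightarrow>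
     (\<forall>k. 0 \<in> A k \<and> (\<forall>x\<in>A k. \<forall>y\<in>A k. x + y \<in> A k) \<and> (\<forall>x\<in>A k. - x \<in> A k)) \<and>
     1 \<in> A 0 \<and>
     (\<forall>i j. \<forall>x\<in>A i. \<forall>y\<in>A j. x * y \<in> A (i + j)) \<and>
     (\<forall>x. \<exists>!c. is_decomp A x c) \<and>
     (\<forall>i j. \<forall>x\<in>A i. \<forall>y\<in>A j. x * y = (-1) ^ nat \<bar>i * j\<bar> * (y * x)) \<and>
     of_nat p = (0::'a)"

definition comp :: "(int \<Rightarrow> 'a::ring_1 set) \<Rightarrow> int \<Rightarrow> 'a \<Rightarrow> 'a" where
  "comp A k x = (THE c. is_decomp A x c) k"

definition ginv :: "(int \<Rightarrow> 'a::ring_1 set) \<Rightarrow> 'a \<Rightarrow> 'a" where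
  "ginv A x = (\<Sum>k\<in>{k. comp A k x \<noteq> 0}. (-1) ^ nat \<bar>k\<bar> * comp A k x)"

section \<open>The graded tensor product A_* \<otimes> F_p[\<epsilon>]/(\<epsilon>^2), deg \<epsilon> = -1\<close>

text \<open>A pair (a, b) represents a + b\<epsilon>.  Koszul sign rule:
 \<epsilon> c = (-1)^(deg c) c \<epsilon>, hence (a + b\<epsilon>)(c + d\<epsilon>) = ac + (ad + b ginv(c))\<epsilon>.\<close>

definition emul :: "(int \<Rightarrow> 'a::ring_1 set) \<Rightarrow> 'a \<times> 'a \<Rightarrow> 'a \<times> 'a \<Rightarrow> 'a \<times> 'a" where
  "emul A x y = (fst x * fst y, fst x * snd y + snd x * ginv A (fst y))"

fun epow :: "(int \<Rightarrow> 'a::ring_1 set) \<Rightarrow> 'a \<times> 'a \<Rightarrow> nat \<Rightarrow> 'a \<times> 'a" where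
  "epow A x 0 = (1, 0)"
| "epow A x (Suc m) = emul A (epow A x m) x"

text \<open>An element sum_i alpha_i X^(p^i) is represented by its coefficient
sequence i \<mapsto> alpha_i.  Product: (alpha\<cdot>beta)_i = sum_(j=0..i) alpha_(i-j)^(p^j) beta_j.\<close>

definition G2 :: "(int \<Rightarrow> 'a::ring_1 set) \<Rightarrow> (nat \<Rightarrow> 'a) monoid" where
  "G2 A = \<lparr> partial_object.carrier = {\<alpha>. (\<forall>i. \<alpha> i \<in> A (2 ^ i - 1)) \<and> \<alpha> 0 = 1},
            monoid.mult = (\<lambda>\<alpha> \<beta> i. \<Sum>j\<le>i. \<alpha> (i - j) ^ (2 ^ j) * \<beta> j),
            monoid.one = (\<lambda>i. if i = 0 then 1 else 0) \<rparr>"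

definition G2n :: "nat \<Rightarrow> (int \<Rightarrow> 'a::ring_1 set) \<Rightarrow> (nat \<Rightarrow> 'a) set" where
  "G2n n A = {\<alpha> \<in> carrier (G2 A).
      (\<forall>i\<in>{1..n}. \<alpha> i ^ (2 ^ (n - i + 1)) = 0) \<and> (\<forall>i\<ge>n + 1. \<alpha> i = 0)}"

definition Godd :: "nat \<Rightarrow> (int \<Rightarrow> 'a::ring_1 set) \<Rightarrow> (nat \<Rightarrow> 'a \<times> 'a) monoid" where
  "Godd p A = \<lparr> partial_object.carrier = {\<alpha>.
              (\<forall>i. fst (\<alpha> i) \<in> A (2 * (int (p ^ i) - 1))
                 \<and> snd (\<alpha> i) \<in> A (2 * (int (p ^ i) - 1) + 1))
              \<and> fst (\<alpha> 0) = 1},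
            monoid.mult = (\<lambda>\<alpha> \<beta> i. \<Sum>j\<le>i. emul A (epow A (\<alpha> (i - j)) (p ^ j)) (\<beta> j)),
            monoid.one = (\<lambda>i. if i = 0 then (1, 0) else (0, 0)) \<rparr>"

definition Goddn :: "nat \<Rightarrow> nat \<Rightarrow> (int \<Rightarrow> 'a::ring_1 set) \<Rightarrow> (nat \<Rightarrow> 'a \<times> 'a) set" where
  "Goddn p n A = {\<alpha> \<in> carrier (Godd p A).
      (\<forall>i\<in>{1..n}. epow A (\<alpha> i) (p ^ (n - i + 1)) = (0, 0)) \<and> (\<forall>i\<ge>n + 1. \<alpha> i = (0, 0))}"

end

(*
  Both groups consist of p-typical series under composition, (alpha.beta)_i =
  sum_j alpha_(i-j)^(p^j) beta_j.  Coefficients of even degree (all coefficients when p = 2)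
  are central, so raising a sum of such terms to a power of p is additive (the freshman's
  dream, computed in the centre); this gives associativity, and right inverses are solved
  for recursively in the index.  For odd p the epsilon-parts only enter linearly, because
  epsilon^2 = 0 and p = 0 make every p-power of a coefficient epsilon-free.

  Truncation is preserved: (alpha.beta)_i^(p^(n-i+1)) is the sum of the terms
  alpha_(i-j)^(p^(n-i+1+j)) beta_j^(p^(n-i+1)).  For j < i the first factor vanishes by the
  condition on alpha at index i - j, whose exponent p^(n-(i-j)+1) is exactly this one, and
  for j = i the second factor vanishes by the condition on beta.  The same estimate, applied
  to the recursion defining the inverse, shows that the inverse is truncated as well.
*)

theory Submission
  imports Defs
begin

section \<open>Central elements and the freshman's dream\<close>

definition central :: "'a::ring_1 \<Rightarrow> bool" where
  "central x \<longleftrightarrow> (\<forall>y. x * y = y * x)"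

lemma centralD: "central x \<Longrightarrow> x * y = y * x"
  by (simp add: central_def)

lemma central_0 [simp]: "central 0" and central_1 [simp]: "central 1"
  by (simp_all add: central_def)

lemma central_add: "central x \<Longrightarrow> central y \<Longrightarrow> central (x + y)"
  by (simp add: central_def algebra_simps)

lemma central_uminus: "central x \<Longrightarrow> central (- x)"
  by (simp add: central_def)

lemma central_diff: "central x \<Longrightarrow> central y \<Longrightarrow> central (x - y)"
  by (simp add: central_def algebra_simps)

lemma central_mult: "central x \<Longrightarrow> central y \<Longrightarrow> central (x * y)"
  unfolding central_def by (metis mult.assoc)

lemma central_power: "central x \<Longrightarrow> central (x ^ n)"
  by (induct n) (simp_all add: central_mult)

lemma central_sum: "(\<And>i. i \<in> S \<Longrightarrow> central (f i)) \<Longrightarrow> central (sum f S)"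
  by (induct S rule: infinite_finite_induct) (simp_all add: central_add)

lemma power_mult_distrib_central:
  assumes "central a"
  shows "(a * b) ^ n = a ^ n * b ^ n"
proof (induct n)
  case (Suc n)
  have "b * a ^ n = a ^ n * b"
    using centralD[OF central_power[OF assms]] by metis
  have "(a * b) ^ Suc n = a * ((b * a ^ n) * b ^ n)"
    using Suc by (simp add: mult.assoc)
  then show ?case
    unfolding \<open>b * a ^ n = a ^ n * b\<close> by (simp add: mult.assoc)
qed simp

text \<open>The centre is a commutative ring, so the library's freshman's dream applies to central
  elements.\<close>

typedef (overloaded) 'a center = "{x :: 'a::ring_1. central x}"
  morphisms val_center Abs_center
  by (rule exI[of _ 0]) simp

setup_lifting type_definition_center

instantiation center :: (ring_1) comm_ring_1
begin

lift_definition zero_center :: "'a center" is 0 by simp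
lift_definition one_center :: "'a center" is 1 by simp
lift_definition plus_center :: "'a center \<Rightarrow> 'a center \<Rightarrow> 'a center" is "(+)"
  by (rule central_add)
lift_definition uminus_center :: "'a center \<Rightarrow> 'a center" is uminus
  by (rule central_uminus)
lift_definition minus_center :: "'a center \<Rightarrow> 'a center \<Rightarrow> 'a center" is "(-)"
  by (rule central_diff)
lift_definition times_center :: "'a center \<Rightarrow> 'a center \<Rightarrow> 'a center" is "(*)"
  by (rule central_mult)

instance
proof
  fix a b c :: "'a center"
  show "a * b = b * a"
    by transfer (simp add: centralD)
qed (transfer; simp add: algebra_simps)+

end

lemma val_center_of_nat: "val_center (of_nat n) = of_nat n"
  by (induct n) (simp_all add: zero_center.rep_eq one_center.rep_eq plus_center.rep_eq)

lemma val_center_power: "val_center (x ^ n) = val_center x ^ n"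
  by (induct n) (simp_all add: one_center.rep_eq times_center.rep_eq)

lemma val_center_sum: "val_center (sum f S) = (\<Sum>i\<in>S. val_center (f i))"
  by (induct S rule: infinite_finite_induct) (simp_all add: zero_center.rep_eq plus_center.rep_eq)

lemma sum_power_prime_power_central:
  fixes f :: "'b \<Rightarrow> 'a::ring_1"
  assumes p: "prime p" "of_nat p = (0::'a)" and central: "\<And>i. i \<in> S \<Longrightarrow> central (f i)"
  shows "(\<Sum>i\<in>S. f i) ^ (p ^ k) = (\<Sum>i\<in>S. f i ^ (p ^ k))"
proof -
  define g where "g i = Abs_center (f i)" for i
  have val_g: "val_center (g i) = f i" if "i \<in> S" for i
    using central[OF that] by (simp add: g_def Abs_center_inverse)
  have "val_center (of_nat p :: 'a center) = val_center 0"
    by (simp add: val_center_of_nat p zero_center.rep_eq)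
  then have "CHAR('a center) dvd p"
    by (simp add: val_center_inject of_nat_eq_0_iff_char_dvd)
  then have "CHAR('a center) = p"
    using p(1) by (metis CHAR_not_1 One_nat_def prime_nat_iff)
  then have "(\<Sum>i\<in>S. g i) ^ (p ^ k) = (\<Sum>i\<in>S. g i ^ (p ^ k))"
    using p(1) by (intro freshmans_dream_sum') simp_all
  then have "val_center ((\<Sum>i\<in>S. g i) ^ (p ^ k)) = val_center (\<Sum>i\<in>S. g i ^ (p ^ k))"
    by simp
  then show ?thesis
    unfolding val_center_power val_center_sum using val_g by simp
qed

lemma power_comp_term_central:
  assumes "central u"
  shows "(u ^ (q ^ j) * c) ^ (q ^ e) = u ^ (q ^ (j + e)) * c ^ (q ^ e)"
  using assms by (simp add: power_mult_distrib_central central_power power_add power_mult[symmetric])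

lemma sum_comp_terms_power:
  fixes u c :: "nat \<Rightarrow> 'a::ring_1"
  assumes "prime q" "of_nat q = (0::'a)" and "\<And>j. j \<in> S \<Longrightarrow> central (u j)"
    and "\<And>j. j \<in> S \<Longrightarrow> central (c j)"
  shows "(\<Sum>j\<in>S. u j ^ (q ^ j) * c j) ^ (q ^ e) = (\<Sum>j\<in>S. u j ^ (q ^ (j + e)) * c j ^ (q ^ e))"
  using assms
  by (simp add: sum_power_prime_power_central central_mult central_power power_comp_term_central)

section \<open>Composition of p-typical coefficient sequences\<close>

text \<open>The coefficients of c(a(X)) for a = sum_i a_i X^(q^i), c = sum_j c_j X^(q^j), i.e. of the
  product a.c, as long as q-th powers are additive on the a_i.\<close>

definition comp_coeffs :: "nat \<Rightarrow> (nat \<Rightarrow> 'a::ring_1) \<Rightarrow> (nat \<Rightarrow> 'a) \<Rightarrow> nat \<Rightarrow> 'a" where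
  "comp_coeffs q a c i = (\<Sum>j\<le>i. a (i - j) ^ (q ^ j) * c j)"

definition id_coeffs :: "nat \<Rightarrow> 'a::ring_1" where
  "id_coeffs i = (if i = 0 then 1 else 0)"

lemma comp_coeffs_0 [simp]: "comp_coeffs q a c 0 = a 0 * c 0"
  by (simp add: comp_coeffs_def)

lemma comp_coeffs_id_right [simp]: "comp_coeffs q a id_coeffs i = a i"
  by (simp add: comp_coeffs_def id_coeffs_def if_distrib cong: if_cong)

lemma comp_coeffs_id_left [simp]:
  assumes "0 < q"
  shows "comp_coeffs q id_coeffs c i = c i"
proof -
  have "comp_coeffs q id_coeffs c i = (\<Sum>j\<le>i. if j = i then c j else 0)"
    unfolding comp_coeffs_def id_coeffs_def
    by (rule sum.cong) (use assms in \<open>auto simp: power_0_left\<close>)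
  then show ?thesis
    by simp
qed

lemma comp_coeffs_zero_right [simp]: "comp_coeffs q a (\<lambda>i. 0) i = 0"
  by (simp add: comp_coeffs_def)

lemma comp_coeffs_add_right: "comp_coeffs q a (\<lambda>i. c i + d i) i = comp_coeffs q a c i + comp_coeffs q a d i"
  by (simp add: comp_coeffs_def distrib_left sum.distrib)

lemma comp_coeffs_assoc:
  assumes q: "prime q" "of_nat q = (0::'a::ring_1)"
    and a: "\<And>i. central (a i :: 'a)" and c: "\<And>i. central (c i)"
  shows "comp_coeffs q (comp_coeffs q a c) f i = comp_coeffs q a (comp_coeffs q c f) i"
proof -
  define t where "t j m = a (i - (j + m)) ^ (q ^ (j + m)) * c m ^ (q ^ j) * f j" for j m
  have "comp_coeffs q a c (i - j) ^ (q ^ j) * f j = (\<Sum>m\<le>i - j. t j m)" for j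
    unfolding comp_coeffs_def t_def
    by (simp add: sum_comp_terms_power[OF q] a c sum_distrib_right diff_diff_eq add.commute)
  then have "comp_coeffs q (comp_coeffs q a c) f i = (\<Sum>j\<le>i. \<Sum>m\<le>i - j. t j m)"
    by (simp add: comp_coeffs_def)
  also have "\<dots> = (\<Sum>(j, m)\<in>{(j, m). j + m \<le> i}. t j m)"
    by (subst sum.Sigma) (auto intro!: sum.cong)
  also have "\<dots> = (\<Sum>l\<le>i. \<Sum>j\<le>l. t j (l - j))"
    by (rule sum.triangle_reindex_eq)
  also have "\<dots> = comp_coeffs q a (comp_coeffs q c f) i"
    unfolding comp_coeffs_def sum_distrib_left t_def
    by (intro sum.cong refl) (simp add: mult.assoc)
  finally show ?thesis .
qed

section \<open>Truncated sequences\<close>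

lemma power_eq_0_mono: "(x::'a::semiring_1) ^ m = 0 \<Longrightarrow> m \<le> n \<Longrightarrow> x ^ n = 0"
  by (metis le_add_diff_inverse mult_zero_left power_add)

definition truncated :: "nat \<Rightarrow> nat \<Rightarrow> (nat \<Rightarrow> 'a::ring_1) \<Rightarrow> bool" where
  "truncated q n a \<longleftrightarrow> (\<forall>i\<in>{1..n}. a i ^ (q ^ (n - i + 1)) = 0) \<and> (\<forall>i\<ge>n + 1. a i = 0)"

lemma truncated_id_coeffs: "0 < q \<Longrightarrow> truncated q n id_coeffs"
  by (simp add: truncated_def id_coeffs_def power_0_left)

lemma truncated_power_eq_0:
  assumes "truncated q n a" "prime q" "1 \<le> k" "n < k + j"
  shows "a k ^ (q ^ j) = 0"
proof (cases "k \<le> n")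
  case True
  then have "a k ^ (q ^ (n - k + 1)) = 0"
    using assms(1,3) by (simp add: truncated_def)
  moreover have "q ^ (n - k + 1) \<le> q ^ j"
    using True assms(2,4) by (intro power_increasing) (auto simp: prime_gt_0_nat Suc_leI)
  ultimately show ?thesis
    by (rule power_eq_0_mono)
next
  case False
  then show ?thesis
    using assms(1,2) by (simp add: truncated_def prime_gt_0_nat power_0_left)
qed

lemma comp_coeffs_eq_0_above:
  assumes "truncated q n a" "prime q" "\<And>j. n < j \<Longrightarrow> d j = 0" "n < i"
  shows "comp_coeffs q a d i = 0"
  unfolding comp_coeffs_def
proof (intro sum.neutral ballI)
  fix j assume "j \<in> {..i}"
  then show "a (i - j) ^ q ^ j * d j = 0"
    using assms truncated_power_eq_0[OF assms(1,2), of "i - j" j] by (cases "n < j") auto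
qed

lemma truncated_comp_coeffs:
  assumes q: "prime q" "of_nat q = (0::'a::ring_1)"
    and a: "\<And>i. central (a i :: 'a)" "truncated q n a"
    and c: "\<And>i. central (c i)" "truncated q n c"
  shows "truncated q n (comp_coeffs q a c)"
  unfolding truncated_def
proof (intro conjI ballI allI impI)
  fix i assume "n + 1 \<le> i"
  then show "comp_coeffs q a c i = 0"
    using a(2) c(2) q(1) by (intro comp_coeffs_eq_0_above) (auto simp: truncated_def)
next
  fix i assume i: "i \<in> {1..n}"
  define e where "e = n - i + 1"
  have "comp_coeffs q a c i ^ (q ^ e) = (\<Sum>j\<le>i. a (i - j) ^ (q ^ (j + e)) * c j ^ (q ^ e))"
    unfolding comp_coeffs_def by (simp add: sum_comp_terms_power[OF q] a c)
  also have "\<dots> = 0"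
  proof (intro sum.neutral ballI)
    fix j assume "j \<in> {..i}"
    then show "a (i - j) ^ (q ^ (j + e)) * c j ^ (q ^ e) = 0"
      using i c(2) truncated_power_eq_0[OF a(2) q(1), of "i - j" "j + e"]
      by (cases "j = i") (auto simp: truncated_def e_def)
  qed
  finally show "comp_coeffs q a c i ^ (q ^ (n - i + 1)) = 0"
    by (simp add: e_def)
qed

function comp_solution :: "nat \<Rightarrow> (nat \<Rightarrow> 'a::ring_1) \<Rightarrow> (nat \<Rightarrow> 'a) \<Rightarrow> nat \<Rightarrow> 'a" where
  "comp_solution q a r i = r i - (\<Sum>j<i. a (i - j) ^ (q ^ j) * comp_solution q a r j)"
  by auto
termination
  by (relation "measure (\<lambda>(q, a, r, i). i)") auto

declare comp_solution.simps [simp del]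

lemma comp_solution_0 [simp]: "comp_solution q a r 0 = r 0"
  by (subst comp_solution.simps) simp

lemma comp_coeffs_solution:
  assumes "a 0 = 1"
  shows "comp_coeffs q a (comp_solution q a r) i = r i"
  using assms
  by (simp add: comp_coeffs_def lessThan_Suc_atMost[symmetric] comp_solution.simps[of q a r i])

lemma central_comp_solution:
  assumes "\<And>i. central (a i)" "\<And>i. central (r i)"
  shows "central (comp_solution q a r i)"
proof (induct i rule: less_induct)
  case (less i)
  then show ?case
    by (subst comp_solution.simps)
       (intro central_diff central_sum central_mult central_power assms; simp)
qed

lemma comp_solution_eq_0_above:
  assumes "truncated q n a" "prime q" "\<And>j. n < j \<Longrightarrow> r j = 0"
  shows "n < i \<Longrightarrow> comp_solution q a r i = 0"
proof (induct i rule: less_induct)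
  case (less i)
  have "a (i - j) ^ q ^ j * comp_solution q a r j = 0" if "j < i" for j
    using that less truncated_power_eq_0[OF assms(1,2), of "i - j" j] by (cases "n < j") auto
  then show ?case
    using less assms(3) by (subst comp_solution.simps) simp
qed

lemma truncated_comp_solution:
  assumes q: "prime q" "of_nat q = (0::'a::ring_1)"
    and a: "\<And>i. central (a i :: 'a)" "truncated q n a"
  shows "truncated q n (comp_solution q a id_coeffs)"
  unfolding truncated_def
proof (intro conjI ballI allI impI)
  fix i assume "n + 1 \<le> i"
  then show "comp_solution q a id_coeffs i = 0"
    by (intro comp_solution_eq_0_above[OF a(2) q(1)]) (auto simp: id_coeffs_def)
next
  let ?s = "comp_solution q a id_coeffs"
  have s: "central (?s j)" for j
    by (intro central_comp_solution a) (simp add: id_coeffs_def)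
  fix i assume i: "i \<in> {1..n}"
  define e where "e = n - i + 1"
  have "?s i ^ (q ^ e) = (- (\<Sum>j<i. a (i - j) ^ (q ^ j) * ?s j)) ^ (q ^ e)"
    using i by (subst comp_solution.simps) (simp add: id_coeffs_def)
  also have "\<dots> = (-1) ^ (q ^ e) * (\<Sum>j<i. a (i - j) ^ (q ^ j) * ?s j) ^ (q ^ e)"
    by (rule power_minus)
  also have "(\<Sum>j<i. a (i - j) ^ (q ^ j) * ?s j) ^ (q ^ e)
      = (\<Sum>j<i. a (i - j) ^ (q ^ (j + e)) * ?s j ^ (q ^ e))"
    by (rule sum_comp_terms_power[OF q]) (simp_all add: a s)
  also have "\<dots> = 0"
  proof (intro sum.neutral ballI)
    fix j assume "j \<in> {..<i}"
    then show "a (i - j) ^ (q ^ (j + e)) * ?s j ^ (q ^ e) = 0"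
      using truncated_power_eq_0[OF a(2) q(1), of "i - j" "j + e"] by (simp add: e_def)
  qed
  finally show "?s i ^ (q ^ (n - i + 1)) = 0"
    by (simp add: e_def)
qed

lemma (in monoid) group_r_invI:
  assumes r_inv_ex: "\<And>x. x \<in> carrier G \<Longrightarrow> \<exists>y \<in> carrier G. x \<otimes> y = \<one>"
  shows "group G"
proof (rule group_l_invI)
  fix x assume x: "x \<in> carrier G"
  obtain y where y: "y \<in> carrier G" "x \<otimes> y = \<one>"
    using r_inv_ex[OF x] by blast
  obtain z where z: "z \<in> carrier G" "y \<otimes> z = \<one>"
    using r_inv_ex[OF y(1)] by blast
  have "x = x \<otimes> (y \<otimes> z)"
    using x z by simp
  also have "\<dots> = (x \<otimes> y) \<otimes> z"
    by (rule m_assoc[OF x y(1) z(1), symmetric])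
  also have "\<dots> = z"
    using y z by simp
  finally have "y \<otimes> x = \<one>"
    using z by simp
  with y show "\<exists>y \<in> carrier G. y \<otimes> x = \<one>"
    by blast
qed

lemma (in group) subgroup_r_invI:
  assumes sub: "H \<subseteq> carrier G" and "\<one> \<in> H" and "\<And>x y. x \<in> H \<Longrightarrow> y \<in> H \<Longrightarrow> x \<otimes> y \<in> H"
    and r_inv_ex: "\<And>x. x \<in> H \<Longrightarrow> \<exists>y \<in> H. x \<otimes> y = \<one>"
  shows "subgroup H G"
proof (rule subgroupI)
  fix x assume x: "x \<in> H"
  then obtain y where y: "y \<in> H" "x \<otimes> y = \<one>"
    using r_inv_ex by blast
  have "y \<otimes> x = \<one>"
    using inv_comm[OF y(2)] x y(1) sub by blast
  then have "inv x = y"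
    using x y(1) sub by (intro inv_equality) auto
  with y(1) show "inv x \<in> H"
    by simp
qed (use assms in blast)+

locale graded_Fp_algebra =
  fixes p :: nat and A :: "int \<Rightarrow> 'a::ring_1 set"
  assumes prime: "prime p" and graded: "graded_comm_algebra_Fp p A"
begin

lemma zero_mem: "0 \<in> A k"
  and add_mem: "x \<in> A k \<Longrightarrow> y \<in> A k \<Longrightarrow> x + y \<in> A k"
  and uminus_mem: "x \<in> A k \<Longrightarrow> - x \<in> A k"
  and one_mem: "1 \<in> A 0"
  and mult_mem: "x \<in> A i \<Longrightarrow> y \<in> A j \<Longrightarrow> x * y \<in> A (i + j)"
  and koszul_sign: "x \<in> A i \<Longrightarrow> y \<in> A j \<Longrightarrow> x * y = (-1) ^ nat \<bar>i * j\<bar> * (y * x)"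
  and unique_decomp: "\<exists>!c. is_decomp A z c"
  and of_nat_char: "of_nat p = (0::'a)"
  using graded unfolding graded_comm_algebra_Fp_def by blast+

lemma diff_mem: "x \<in> A k \<Longrightarrow> y \<in> A k \<Longrightarrow> x - y \<in> A k"
  unfolding diff_conv_add_uminus by (intro add_mem uminus_mem)

lemma power_mem: "x \<in> A k \<Longrightarrow> x ^ m \<in> A (k * int m)"
proof (induct m)
  case (Suc m)
  then have "x * x ^ m \<in> A (k + k * int m)"
    by (intro mult_mem)
  then show ?case
    by (simp add: algebra_simps)
qed (simp add: one_mem)

lemma sum_mem: "(\<And>i. i \<in> S \<Longrightarrow> f i \<in> A k) \<Longrightarrow> sum f S \<in> A k"
  by (induct S rule: infinite_finite_induct) (auto intro: zero_mem add_mem)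

lemma central_homogeneous:
  assumes x: "x \<in> A k" and "even k \<or> p = 2"
  shows "central x"
proof -
  have sign: "(-1::'a) ^ nat \<bar>k * j\<bar> = 1" for j
  proof (cases "even k")
    case True
    then show ?thesis
      by (simp add: even_nat_iff)
  next
    case False
    with assms(2) have "(1::'a) + 1 = 0"
      using of_nat_char by simp
    then have "(-1::'a) = 1"
      by (rule minus_unique)
    then show ?thesis
      by simp
  qed
  show ?thesis
    unfolding central_def
  proof
    fix y
    obtain c where "is_decomp A y c"
      using unique_decomp by blast
    then have y: "y = (\<Sum>j\<in>{j. c j \<noteq> 0}. c j)" and c: "\<And>j. c j \<in> A j"
      by (auto simp: is_decomp_def)
    have "x * c j = c j * x" for j
      using koszul_sign[OF x c] sign by simp
    then show "x * y = y * x"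
      unfolding y by (simp add: sum_distrib_left sum_distrib_right)
  qed
qed

lemma comp_homogeneous:
  assumes x: "x \<in> A k"
  shows "comp A j x = (if j = k then x else 0)"
proof -
  let ?c = "\<lambda>j. if j = k then x else 0"
  have support: "{j. ?c j \<noteq> 0} = (if x = 0 then {} else {k})"
    by auto
  have "is_decomp A x ?c"
    using x zero_mem by (auto simp: is_decomp_def support)
  then have "(THE c. is_decomp A x c) = ?c"
    by (rule the1_equality[OF unique_decomp])
  then show ?thesis
    by (simp add: comp_def)
qed

lemma ginv_homogeneous: "x \<in> A k \<Longrightarrow> ginv A x = (-1) ^ nat \<bar>k\<bar> * x"
  by (cases "x = 0") (simp_all add: ginv_def comp_homogeneous)

lemma ginv_one: "ginv A 1 = 1"
  using ginv_homogeneous[OF one_mem] by simp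

lemma comp_term_mem:
  assumes "j \<le> i" "u \<in> A (e * (int p ^ (i - j) - 1))" "c \<in> A (e * (int p ^ j - 1) + s)"
  shows "u ^ (p ^ j) * c \<in> A (e * (int p ^ i - 1) + s)"
proof -
  have split: "int p ^ (i - j) * int p ^ j = int p ^ i"
    using assms(1) by (simp flip: power_add)
  have "e * (int p ^ (i - j) - 1) * int (p ^ j) + (e * (int p ^ j - 1) + s)
      = e * (int p ^ i - 1) + s"
    by (simp add: algebra_simps flip: split)
  with mult_mem[OF power_mem[OF assms(2)] assms(3)] show ?thesis
    by metis
qed

definition graded_seq :: "int \<Rightarrow> int \<Rightarrow> (nat \<Rightarrow> 'a) \<Rightarrow> bool" where
  "graded_seq e s a \<longleftrightarrow> (\<forall>k. a k \<in> A (e * (int p ^ k - 1) + s))"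

lemma graded_seq_id_coeffs: "graded_seq e 0 id_coeffs"
  by (simp add: graded_seq_def id_coeffs_def zero_mem one_mem)

lemma graded_seq_zero: "graded_seq e s (\<lambda>i. 0)"
  by (simp add: graded_seq_def zero_mem)

lemma graded_seq_add: "graded_seq e s a \<Longrightarrow> graded_seq e s b \<Longrightarrow> graded_seq e s (\<lambda>i. a i + b i)"
  by (simp add: graded_seq_def add_mem)

lemma graded_seq_uminus: "graded_seq e s a \<Longrightarrow> graded_seq e s (\<lambda>i. - a i)"
  by (simp add: graded_seq_def uminus_mem)

lemma graded_seq_comp_coeffs:
  assumes "graded_seq e 0 a" "graded_seq e s c"
  shows "graded_seq e s (comp_coeffs p a c)"
  using assms unfolding graded_seq_def comp_coeffs_def
  by (auto intro!: sum_mem comp_term_mem)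

lemma graded_seq_comp_solution:
  assumes a: "graded_seq e 0 a" and r: "graded_seq e s r"
  shows "graded_seq e s (comp_solution p a r)"
  unfolding graded_seq_def
proof
  fix i show "comp_solution p a r i \<in> A (e * (int p ^ i - 1) + s)"
  proof (induct i rule: less_induct)
    case (less i)
    with a r show ?case
      unfolding graded_seq_def
      by (subst comp_solution.simps) (auto intro!: diff_mem sum_mem comp_term_mem)
  qed
qed

end

section \<open>The case p = 2\<close>

lemma carrier_G2: "carrier (G2 A) = {\<alpha>. (\<forall>i. \<alpha> i \<in> A (2 ^ i - 1)) \<and> \<alpha> 0 = 1}"
  and mult_G2: "\<alpha> \<otimes>\<^bsub>G2 A\<^esub> \<beta> = comp_coeffs 2 \<alpha> \<beta>"
  and one_G2: "\<one>\<^bsub>G2 A\<^esub> = id_coeffs"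
  by (simp_all add: G2_def comp_coeffs_def[abs_def] id_coeffs_def[abs_def])

lemma G2n_eq: "G2n n A = {\<alpha> \<in> carrier (G2 A). truncated 2 n \<alpha>}"
  by (simp add: G2n_def truncated_def)

locale graded_F2_algebra = graded_Fp_algebra 2 A for A :: "int \<Rightarrow> 'a::ring_1 set"
begin

lemma in_carrier_G2: "\<alpha> \<in> carrier (G2 A) \<longleftrightarrow> graded_seq 1 0 \<alpha> \<and> \<alpha> 0 = 1"
  by (simp add: carrier_G2 graded_seq_def)

lemma central_G2: "\<alpha> \<in> carrier (G2 A) \<Longrightarrow> central (\<alpha> k)"
  by (rule central_homogeneous[of _ "2 ^ k - 1"]) (simp_all add: carrier_G2)

lemma monoid_G2: "monoid (G2 A)"
proof (rule monoidI)
  show "\<one>\<^bsub>G2 A\<^esub> \<in> carrier (G2 A)"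
    unfolding one_G2 in_carrier_G2 by (simp add: graded_seq_id_coeffs id_coeffs_def)
  show "x \<otimes>\<^bsub>G2 A\<^esub> y \<in> carrier (G2 A)" if "x \<in> carrier (G2 A)" "y \<in> carrier (G2 A)" for x y
    using that unfolding mult_G2 in_carrier_G2 by (simp add: graded_seq_comp_coeffs)
  show "x \<otimes>\<^bsub>G2 A\<^esub> y \<otimes>\<^bsub>G2 A\<^esub> z = x \<otimes>\<^bsub>G2 A\<^esub> (y \<otimes>\<^bsub>G2 A\<^esub> z)"
    if "x \<in> carrier (G2 A)" "y \<in> carrier (G2 A)" "z \<in> carrier (G2 A)" for x y z
    unfolding mult_G2 by (intro ext comp_coeffs_assoc prime of_nat_char central_G2 that)
  show "\<one>\<^bsub>G2 A\<^esub> \<otimes>\<^bsub>G2 A\<^esub> x = x" "x \<otimes>\<^bsub>G2 A\<^esub> \<one>\<^bsub>G2 A\<^esub> = x" for x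
    unfolding mult_G2 one_G2 by (simp_all add: fun_eq_iff)
qed

lemma comp_solution_in_carrier_G2:
  "x \<in> carrier (G2 A) \<Longrightarrow> comp_solution 2 x id_coeffs \<in> carrier (G2 A)"
  unfolding in_carrier_G2 by (simp add: graded_seq_comp_solution graded_seq_id_coeffs id_coeffs_def)

lemma mult_comp_solution_G2:
  "x \<in> carrier (G2 A) \<Longrightarrow> x \<otimes>\<^bsub>G2 A\<^esub> comp_solution 2 x id_coeffs = \<one>\<^bsub>G2 A\<^esub>"
  unfolding in_carrier_G2 mult_G2 one_G2 by (simp add: fun_eq_iff comp_coeffs_solution)

lemma group_G2: "group (G2 A)"
  by (rule monoid.group_r_invI[OF monoid_G2])
    (use comp_solution_in_carrier_G2 mult_comp_solution_G2 in blast)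

lemma subgroup_G2n: "subgroup (G2n n A) (G2 A)"
proof (rule group.subgroup_r_invI[OF group_G2])
  show "G2n n A \<subseteq> carrier (G2 A)"
    by (auto simp: G2n_eq)
  show "\<one>\<^bsub>G2 A\<^esub> \<in> G2n n A"
    using monoid.one_closed[OF monoid_G2] by (simp add: G2n_eq one_G2 truncated_id_coeffs)
  show "x \<otimes>\<^bsub>G2 A\<^esub> y \<in> G2n n A" if "x \<in> G2n n A" "y \<in> G2n n A" for x y
  proof -
    have "truncated 2 n (comp_coeffs 2 x y)"
      using that by (intro truncated_comp_coeffs prime of_nat_char central_G2) (simp_all add: G2n_eq)
    with that monoid.m_closed[OF monoid_G2] show ?thesis
      by (simp add: G2n_eq mult_G2)
  qed
  show "\<exists>y \<in> G2n n A. x \<otimes>\<^bsub>G2 A\<^esub> y = \<one>\<^bsub>G2 A\<^esub>" if "x \<in> G2n n A" for x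
  proof -
    have "truncated 2 n (comp_solution 2 x id_coeffs)"
      using that by (intro truncated_comp_solution prime of_nat_char central_G2) (simp_all add: G2n_eq)
    with that show ?thesis
      by (auto simp: G2n_eq intro!: bexI[of _ "comp_solution 2 x id_coeffs"]
          comp_solution_in_carrier_G2 mult_comp_solution_G2)
  qed
qed

end

section \<open>The case of odd p\<close>

lemma epow_central:
  assumes "central a" "ginv A a = a"
  shows "epow A (a, b) m = (a ^ m, of_nat m * (a ^ (m - 1) * b))"
proof (induct m)
  case (Suc m)
  have "of_nat m * (a ^ (m - 1) * b) * a = of_nat m * (a ^ m * b)"
  proof (cases m)
    case (Suc k)
    have "a ^ k * b * a = a ^ k * a * b"
      using centralD[OF assms(1), of b] by (simp add: mult.assoc)
    then show ?thesis
      using Suc by (metis diff_Suc_1 mult.assoc power_Suc2)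
  qed simp
  with Suc assms(2) show ?case
    by (simp add: emul_def algebra_simps power_commutes)
qed simp

lemma epow_char_power:
  fixes x :: "'a::ring_1 \<times> 'a"
  assumes "central (fst x)" "ginv A (fst x) = fst x" "of_nat q = (0::'a)"
  shows "epow A x (q ^ j) = (fst x ^ (q ^ j), if j = 0 then snd x else 0)"
  using epow_central[OF assms(1,2), of "snd x" "q ^ j"]
  by (cases j) (simp_all add: of_nat_power assms(3))

definition Godd_inv :: "nat \<Rightarrow> (nat \<Rightarrow> 'a::ring_1 \<times> 'a) \<Rightarrow> nat \<Rightarrow> 'a \<times> 'a" where
  "Godd_inv q \<alpha> i =
    (comp_solution q (fst \<circ> \<alpha>) id_coeffs i, comp_solution q (fst \<circ> \<alpha>) (\<lambda>k. - snd (\<alpha> k)) i)"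

lemma one_Godd: "\<one>\<^bsub>Godd p A\<^esub> = (\<lambda>i. (id_coeffs i, 0))"
  by (simp add: Godd_def id_coeffs_def fun_eq_iff)

context graded_Fp_algebra
begin

lemma in_carrier_Godd:
  "\<alpha> \<in> carrier (Godd p A) \<longleftrightarrow>
     graded_seq 2 0 (fst \<circ> \<alpha>) \<and> graded_seq 2 1 (snd \<circ> \<alpha>) \<and> fst (\<alpha> 0) = 1"
  by (auto simp: Godd_def graded_seq_def)

lemma central_Godd: "\<alpha> \<in> carrier (Godd p A) \<Longrightarrow> central (fst (\<alpha> k))"
  by (rule central_homogeneous[of _ "2 * (int p ^ k - 1)"]) (simp_all add: Godd_def)

lemma ginv_Godd: "\<alpha> \<in> carrier (Godd p A) \<Longrightarrow> ginv A (fst (\<alpha> k)) = fst (\<alpha> k)"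
  by (subst ginv_homogeneous[of _ "2 * (int p ^ k - 1)"]) (simp_all add: Godd_def nat_mult_distrib)

lemma epow_Godd:
  "\<alpha> \<in> carrier (Godd p A) \<Longrightarrow>
    epow A (\<alpha> k) (p ^ j) = (fst (\<alpha> k) ^ (p ^ j), if j = 0 then snd (\<alpha> k) else 0)"
  by (rule epow_char_power) (simp_all add: central_Godd ginv_Godd of_nat_char)

lemma mult_Godd:
  assumes \<alpha>: "\<alpha> \<in> carrier (Godd p A)" and \<beta>: "\<beta> \<in> carrier (Godd p A)"
  shows "\<alpha> \<otimes>\<^bsub>Godd p A\<^esub> \<beta> =
    (\<lambda>i. (comp_coeffs p (fst \<circ> \<alpha>) (fst \<circ> \<beta>) i, comp_coeffs p (fst \<circ> \<alpha>) (snd \<circ> \<beta>) i + snd (\<alpha> i)))"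
proof
  fix i
  have \<beta>0: "fst (\<beta> 0) = 1"
    using \<beta> by (simp add: in_carrier_Godd)
  have "emul A (epow A (\<alpha> (i - j)) (p ^ j)) (\<beta> j) =
     (fst (\<alpha> (i - j)) ^ (p ^ j) * fst (\<beta> j),
      fst (\<alpha> (i - j)) ^ (p ^ j) * snd (\<beta> j) + (if j = 0 then snd (\<alpha> i) else 0))" for j
    by (cases "j = 0") (simp_all add: emul_def epow_Godd[OF \<alpha>] ginv_Godd[OF \<beta>] \<beta>0 ginv_one)
  then show "(\<alpha> \<otimes>\<^bsub>Godd p A\<^esub> \<beta>) i =
    (comp_coeffs p (fst \<circ> \<alpha>) (fst \<circ> \<beta>) i, comp_coeffs p (fst \<circ> \<alpha>) (snd \<circ> \<beta>) i + snd (\<alpha> i))"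
    by (simp add: Godd_def comp_coeffs_def sum_prod sum.distrib)
qed

lemma monoid_Godd: "monoid (Godd p A)"
proof (rule monoidI)
  have p: "0 < p"
    using prime by (simp add: prime_gt_0_nat)
  show one: "\<one>\<^bsub>Godd p A\<^esub> \<in> carrier (Godd p A)"
    by (simp add: in_carrier_Godd one_Godd o_def graded_seq_id_coeffs graded_seq_zero)
      (simp add: id_coeffs_def)
  show closed: "x \<otimes>\<^bsub>Godd p A\<^esub> y \<in> carrier (Godd p A)"
    if "x \<in> carrier (Godd p A)" "y \<in> carrier (Godd p A)" for x y
    using that by (simp add: in_carrier_Godd mult_Godd o_def graded_seq_comp_coeffs graded_seq_add)
  show "x \<otimes>\<^bsub>Godd p A\<^esub> y \<otimes>\<^bsub>Godd p A\<^esub> z = x \<otimes>\<^bsub>Godd p A\<^esub> (y \<otimes>\<^bsub>Godd p A\<^esub> z)"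
    if x: "x \<in> carrier (Godd p A)" and y: "y \<in> carrier (Godd p A)" and z: "z \<in> carrier (Godd p A)"
    for x y z
    unfolding mult_Godd[OF closed[OF x y] z] mult_Godd[OF x closed[OF y z]]
    unfolding mult_Godd[OF x y] mult_Godd[OF y z]
    using x y by (simp add: o_def comp_coeffs_assoc[OF prime of_nat_char] central_Godd
        comp_coeffs_add_right add.assoc)
  show "\<one>\<^bsub>Godd p A\<^esub> \<otimes>\<^bsub>Godd p A\<^esub> x = x" "x \<otimes>\<^bsub>Godd p A\<^esub> \<one>\<^bsub>Godd p A\<^esub> = x"
    if "x \<in> carrier (Godd p A)" for x
    using that one p by (simp_all add: mult_Godd one_Godd o_def fun_eq_iff)
qed

lemma Godd_inv_in_carrier:
  "x \<in> carrier (Godd p A) \<Longrightarrow> Godd_inv p x \<in> carrier (Godd p A)"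
  by (simp add: in_carrier_Godd Godd_inv_def o_def graded_seq_comp_solution graded_seq_id_coeffs
      graded_seq_uminus) (simp add: id_coeffs_def)

lemma mult_Godd_inv:
  "x \<in> carrier (Godd p A) \<Longrightarrow> x \<otimes>\<^bsub>Godd p A\<^esub> Godd_inv p x = \<one>\<^bsub>Godd p A\<^esub>"
  by (simp add: mult_Godd Godd_inv_in_carrier one_Godd fun_eq_iff)
    (simp add: Godd_inv_def o_def comp_coeffs_solution in_carrier_Godd)

lemma group_Godd: "group (Godd p A)"
  by (rule monoid.group_r_invI[OF monoid_Godd]) (use Godd_inv_in_carrier mult_Godd_inv in blast)

lemma Goddn_eq:
  "Goddn p n A = {\<alpha> \<in> carrier (Godd p A). truncated p n (fst \<circ> \<alpha>) \<and> (\<forall>i>n. snd (\<alpha> i) = 0)}"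
proof -
  have "(\<forall>i\<in>{1..n}. epow A (\<alpha> i) (p ^ (n - i + 1)) = (0, 0)) \<longleftrightarrow>
      (\<forall>i\<in>{1..n}. fst (\<alpha> i) ^ (p ^ (n - i + 1)) = 0)" if "\<alpha> \<in> carrier (Godd p A)" for \<alpha>
    by (simp only: epow_Godd[OF that] prod.inject) simp
  then show ?thesis
    by (auto simp: Goddn_def truncated_def prod_eq_iff Suc_le_eq)
qed

lemma subgroup_Goddn: "subgroup (Goddn p n A) (Godd p A)"
proof (rule group.subgroup_r_invI[OF group_Godd])
  show "Goddn p n A \<subseteq> carrier (Godd p A)"
    by (auto simp: Goddn_eq)
  show "\<one>\<^bsub>Godd p A\<^esub> \<in> Goddn p n A"
    using monoid.one_closed[OF monoid_Godd] prime
    by (simp add: Goddn_eq one_Godd o_def truncated_id_coeffs prime_gt_0_nat)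
  show "x \<otimes>\<^bsub>Godd p A\<^esub> y \<in> Goddn p n A" if "x \<in> Goddn p n A" "y \<in> Goddn p n A" for x y
  proof -
    have x: "x \<in> carrier (Godd p A)" "truncated p n (fst \<circ> x)" "\<And>i. n < i \<Longrightarrow> snd (x i) = 0"
      and y: "y \<in> carrier (Godd p A)" "truncated p n (fst \<circ> y)" "\<And>i. n < i \<Longrightarrow> snd (y i) = 0"
      using that by (auto simp: Goddn_eq)
    have "truncated p n (comp_coeffs p (fst \<circ> x) (fst \<circ> y))"
      using x y by (intro truncated_comp_coeffs prime of_nat_char) (simp_all add: central_Godd)
    moreover have "comp_coeffs p (fst \<circ> x) (snd \<circ> y) i = 0" if "n < i" for i
      using x y that prime by (intro comp_coeffs_eq_0_above) auto
    ultimately show ?thesis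
      using x y monoid.m_closed[OF monoid_Godd x(1) y(1)]
      by (simp add: Goddn_eq mult_Godd o_def)
  qed
  show "\<exists>y \<in> Goddn p n A. x \<otimes>\<^bsub>Godd p A\<^esub> y = \<one>\<^bsub>Godd p A\<^esub>" if "x \<in> Goddn p n A" for x
  proof -
    have x: "x \<in> carrier (Godd p A)" "truncated p n (fst \<circ> x)" "\<And>i. n < i \<Longrightarrow> snd (x i) = 0"
      using that by (auto simp: Goddn_eq)
    have "truncated p n (comp_solution p (fst \<circ> x) id_coeffs)"
      using x by (intro truncated_comp_solution prime of_nat_char) (simp_all add: central_Godd)
    moreover have "comp_solution p (fst \<circ> x) (\<lambda>k. - snd (x k)) i = 0" if "n < i" for i
      using x that prime by (intro comp_solution_eq_0_above) auto
    ultimately have "Godd_inv p x \<in> Goddn p n A"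
      using Godd_inv_in_carrier[OF x(1)] by (simp add: Goddn_eq Godd_inv_def o_def)
    with mult_Godd_inv[OF x(1)] show ?thesis
      by blast
  qed
qed

end

theorem proposition3p5:
  fixes p n :: nat and A :: "int \<Rightarrow> 'a::ring_1 set"
  assumes "prime p"
    and "graded_comm_algebra_Fp p A"
  shows "if p = 2 then subgroup (G2n n A) (G2 A)
         else subgroup (Goddn p n A) (Godd p A)"
proof (cases "p = 2")
  case True
  with assms have "graded_F2_algebra A"
    by (simp add: graded_F2_algebra_def graded_Fp_algebra_def)
  with True show ?thesis
    by (simp add: graded_F2_algebra.subgroup_G2n)
next
  case False
  from assms have "graded_Fp_algebra p A"
    by (rule graded_Fp_algebra.intro)
  with False show ?thesis
    by (simp add: graded_Fp_algebra.subgroup_Goddn)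
qed

end
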